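(* Let $f=\frac{1}{m}\sum_{i=1}^m f^i$ where each $f^i:\mathbb{R}^n\to\mathbb{R}$ is differentiable. For $1\le k\le m$ let $G_k=\frac{1}{k}\sum_{j=1}^k\nabla f^{i_j}$ be the mini-batch estimator of size $k$, where $\{i_1,\dots,i_k\}$ is a $k$-element subset of $\{1,\dots,m\}$ chosen uniformly at random. Let $\|\cdot\|$ be any norm on $\mathbb{R}^n$ and fix $x\in\mathbb{R}^n$. Then $\mathbb{E}[\|G_k(x)\|]$ is non-increasing in $k$, and for $1\le k\le m-1$, $$\mathbb{E}[\|G_k(x)\|]\le\frac{m}{k}\|\nabla f(x)\|+\frac{m-k}{k}\,\mathbb{E}[\|G_{m-k}(x)\|].$$ *)

theory Defs
  imports "HOL-Analysis.Analysis" "HOL-Probability.Probability"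
begin

definition is_norm :: "('a::real_vector \<Rightarrow> real) \<Rightarrow> bool" where
  "is_norm N \<longleftrightarrow> (\<forall>x y. N (x + y) \<le> N x + N y) \<and>
                  (\<forall>c x. N (c *\<^sub>R x) = \<bar>c\<bar> * N x) \<and>
                  (\<forall>x. N x = 0 \<longleftrightarrow> x = 0)"

definition grad :: "(real^'n \<Rightarrow> real) \<Rightarrow> real^'n \<Rightarrow> real^'n" where
  "grad g x = (SOME v. (g has_derivative (\<lambda>h. v \<bullet> h)) (at x))"

definition minibatch :: "(nat \<Rightarrow> real^'n \<Rightarrow> real) \<Rightarrow> nat set \<Rightarrow> real^'n \<Rightarrow> real^'n" where
  "minibatch f S x = (1 / real (card S)) *\<^sub>R (\<Sum>i\<in>S. grad (f i) x)"

definition batches :: "nat \<Rightarrow> nat \<Rightarrow> nat set pmf" where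
  "batches m k = pmf_of_set {S. S \<subseteq> {1..m} \<and> card S = k}"

definition expected_norm_Gk ::
  "(real^'n \<Rightarrow> real) \<Rightarrow> (nat \<Rightarrow> real^'n \<Rightarrow> real) \<Rightarrow> nat \<Rightarrow> nat \<Rightarrow> real^'n \<Rightarrow> real" where
  "expected_norm_Gk N f m k x = measure_pmf.expectation (batches m k) (\<lambda>S. N (minibatch f S x))"

end

(* Write G_S for the average of the gradients over a batch S. The mean of the leave-one-out
   averages G_(T - {j}), j in T, is G_T itself, so by the triangle inequality N(G_T) is at most the
   mean of the N(G_(T - {j})); and deleting a uniformly random element from a uniformly random
   (k+1)-batch leaves a uniformly random k-batch. For the second
   inequality, k G_S = m grad f - (m - k) G_(A - S) with A = {1..m}, and the complement of a
   uniformly random k-batch is a uniformly random (m - k)-batch. *)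
theory Submission
  imports Defs
begin

definition average :: "('a \<Rightarrow> 'b::real_vector) \<Rightarrow> 'a set \<Rightarrow> 'b" where
  "average g S = (1 / real (card S)) *\<^sub>R (\<Sum>i\<in>S. g i)"

definition subsets_of_card :: "'a set \<Rightarrow> nat \<Rightarrow> 'a set set" where
  "subsets_of_card A k = {S. S \<subseteq> A \<and> card S = k}"

definition subset_average :: "'a set \<Rightarrow> nat \<Rightarrow> ('a set \<Rightarrow> real) \<Rightarrow> real" where
  "subset_average A k h = (\<Sum>S\<in>subsets_of_card A k. h S) / real (card A choose k)"

lemma is_norm_zero: "is_norm N \<Longrightarrow> N 0 = 0"
  unfolding is_norm_def by blast

lemma is_norm_triangle: "is_norm N \<Longrightarrow> N (u + v) \<le> N u + N v"
  unfolding is_norm_def by blast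

lemma is_norm_scaleR: "is_norm N \<Longrightarrow> N (c *\<^sub>R v) = \<bar>c\<bar> * N v"
  unfolding is_norm_def by blast

lemma is_norm_uminus: "is_norm N \<Longrightarrow> N (- v) = N v"
  using is_norm_scaleR[of N "-1" v] by simp

lemma is_norm_sum_le:
  assumes "is_norm N"
  shows "N (\<Sum>i\<in>A. v i) \<le> (\<Sum>i\<in>A. N (v i))"
proof (induction A rule: infinite_finite_induct)
  case (insert a A)
  then show ?case using is_norm_triangle[OF assms, of "v a" "sum v A"] by simp
qed (simp_all add: is_norm_zero[OF assms])

lemma card_scaleR_average: "real (card S) *\<^sub>R average g S = (\<Sum>i\<in>S. g i)"
  by (cases "card S = 0") (auto simp: average_def dest: card_eq_0_iff[THEN iffD1])

lemma average_remove_one: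
  assumes "finite T" "2 \<le> card T"
  shows "average g T = average (\<lambda>j. average g (T - {j})) T"
proof -
  have "(\<Sum>j\<in>T. average g (T - {j})) = (1 / real (card T - 1)) *\<^sub>R (\<Sum>j\<in>T. (\<Sum>i\<in>T. g i) - g j)"
    using assms by (simp add: average_def sum.remove scaleR_sum_right)
  also have "(\<Sum>j\<in>T. (\<Sum>i\<in>T. g i) - g j) = real (card T - 1) *\<^sub>R (\<Sum>i\<in>T. g i)"
    using assms by (simp add: sum_subtractf sum_constant_scaleR of_nat_diff scaleR_diff_left)
  finally have "(\<Sum>j\<in>T. average g (T - {j})) = (\<Sum>i\<in>T. g i)"
    using assms by simp
  then show ?thesis by (simp add: average_def)
qed

lemma average_complement:
  assumes "finite A" "S \<subseteq> A"
  shows "real (card S) *\<^sub>R average g S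
           = real (card A) *\<^sub>R average g A - real (card (A - S)) *\<^sub>R average g (A - S)"
  using sum.subset_diff[OF assms(2,1), of g] by (simp add: card_scaleR_average)

lemma norm_average_le_average_remove_one:
  assumes "is_norm N" "finite T" "2 \<le> card T"
  shows "N (average g T) \<le> (\<Sum>j\<in>T. N (average g (T - {j}))) / real (card T)"
proof -
  have "N (average g T) = N (\<Sum>j\<in>T. average g (T - {j})) / real (card T)"
    by (subst average_remove_one[OF assms(2,3)])
      (simp add: average_def is_norm_scaleR[OF assms(1)])
  also have "\<dots> \<le> (\<Sum>j\<in>T. N (average g (T - {j}))) / real (card T)"
    by (intro divide_right_mono is_norm_sum_le[OF assms(1)]) simp
  finally show ?thesis .
qed

lemma norm_average_le_complement:
  assumes "is_norm N" "finite A" "S \<subseteq> A" "card S = k" "0 < k"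
  shows "N (average g S)
           \<le> real (card A) / real k * N (average g A)
             + real (card A - k) / real k * N (average g (A - S))"
proof -
  have card_diff: "card (A - S) = card A - k"
    using assms by (simp add: card_Diff_subset finite_subset)
  define u where "u = (real (card A) / real k) *\<^sub>R average g A"
  define v where "v = (real (card A - k) / real k) *\<^sub>R average g (A - S)"
  have "average g S = u + - v"
    using arg_cong[OF average_complement[OF assms(2,3)], of "scaleR (1 / real k)"] assms(4,5)
    by (simp add: u_def v_def card_diff algebra_simps)
  then have "N (average g S) \<le> N u + N (- v)"
    by (simp only: is_norm_triangle[OF assms(1)])
  then show ?thesis
    by (simp add: u_def v_def is_norm_uminus[OF assms(1)] is_norm_scaleR[OF assms(1)])
qed

lemma mem_subsets_of_card [simp]: "S \<in> subsets_of_card A k \<longleftrightarrow> S \<subseteq> A \<and> card S = k"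
  by (simp add: subsets_of_card_def)

lemma finite_subsets_of_card: "finite A \<Longrightarrow> finite (subsets_of_card A k)"
  by (rule finite_subset[of _ "Pow A"]) auto

lemma card_subsets_of_card: "finite A \<Longrightarrow> card (subsets_of_card A k) = card A choose k"
  using n_subsets by (simp add: subsets_of_card_def)

lemma subsets_of_card_nonempty: "k \<le> card A \<Longrightarrow> subsets_of_card A k \<noteq> {}"
  by (metis empty_iff mem_subsets_of_card obtain_subset_with_card_n)

lemma sum_subsets_of_card_remove_one:
  fixes h :: "'a set \<Rightarrow> real"
  assumes "finite A"
  shows "(\<Sum>T\<in>subsets_of_card A (Suc k). \<Sum>j\<in>T. h (T - {j}))
           = real (card A - k) * (\<Sum>S\<in>subsets_of_card A k. h S)"
proof -
  have remove_bij: "bij_betw (\<lambda>(T, j). (T - {j}, j))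
          (SIGMA T:subsets_of_card A (Suc k). T) (SIGMA S:subsets_of_card A k. A - S)"
    using assms
    by (intro bij_betw_byWitness[where f' = "\<lambda>(S, j). (insert j S, j)"])
      (auto simp: finite_subset card_insert_if)
  have finite_members: "\<forall>S\<in>subsets_of_card A j. finite (B S)" if "\<And>S. S \<subseteq> A \<Longrightarrow> B S \<subseteq> A" for j B
    using assms by (auto intro: finite_subset[OF that])
  have "(\<Sum>T\<in>subsets_of_card A (Suc k). \<Sum>j\<in>T. h (T - {j}))
          = (\<Sum>(T, j)\<in>(SIGMA T:subsets_of_card A (Suc k). T). h (T - {j}))"
    by (rule sum.Sigma[OF finite_subsets_of_card[OF assms] finite_members]) auto
  also have "\<dots> = (\<Sum>(S, j)\<in>(SIGMA S:subsets_of_card A k. A - S). h S)"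
    using sum.reindex_bij_betw[OF remove_bij, of "\<lambda>(S, j). h S"] by (simp add: case_prod_beta)
  also have "\<dots> = (\<Sum>S\<in>subsets_of_card A k. \<Sum>j\<in>A - S. h S)"
    by (rule sum.Sigma[OF finite_subsets_of_card[OF assms] finite_members, symmetric]) blast
  also have "\<dots> = real (card A - k) * (\<Sum>S\<in>subsets_of_card A k. h S)"
    unfolding sum_distrib_left
    by (rule sum.cong) (auto simp: card_Diff_subset finite_subset[OF _ assms])
  finally show ?thesis .
qed

lemma Suc_times_binomial_comp: "Suc k * (n choose Suc k) = (n - k) * (n choose k)"
  by (simp only: binomial_absorption binomial_absorb_comp)

lemma subset_average_mono:
  assumes "\<And>S. S \<subseteq> A \<Longrightarrow> card S = k \<Longrightarrow> h S \<le> h' S"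
  shows "subset_average A k h \<le> subset_average A k h'"
  unfolding subset_average_def using assms by (intro divide_right_mono sum_mono) auto

lemma subset_average_affine:
  assumes "finite A" "k \<le> card A"
  shows "subset_average A k (\<lambda>S. a + b * h S) = a + b * subset_average A k h"
  using assms
  by (simp add: subset_average_def sum.distrib sum_distrib_left card_subsets_of_card
      add_divide_distrib)

lemma subset_average_complement:
  assumes "finite A" "k \<le> card A"
  shows "subset_average A (card A - k) h = subset_average A k (\<lambda>S. h (A - S))"
proof -
  have "bij_betw (\<lambda>S. A - S) (subsets_of_card A k) (subsets_of_card A (card A - k))"
    using assms
    by (intro bij_betw_byWitness[where f' = "\<lambda>S. A - S"])
      (auto simp: card_Diff_subset finite_subset)
  then show ?thesis
    using assms
    by (simp add: subset_average_def sum.reindex_bij_betw[symmetric] binomial_symmetric[symmetric])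
qed

lemma subset_average_remove_one:
  assumes "finite A" "k < card A"
  shows "subset_average A (Suc k) (\<lambda>T. (\<Sum>j\<in>T. h (T - {j})) / real (Suc k))
           = subset_average A k h"
proof -
  have "real (Suc k) * real (card A choose Suc k) = real (card A - k) * real (card A choose k)"
    by (simp only: Suc_times_binomial_comp flip: of_nat_mult)
  then show ?thesis
    using assms
    by (simp add: subset_average_def sum_subsets_of_card_remove_one flip: sum_divide_distrib)
qed

lemma subset_average_norm_average_Suc_le:
  assumes "is_norm N" "finite A" "1 \<le> k" "k < card A"
  shows "subset_average A (Suc k) (\<lambda>T. N (average g T))
           \<le> subset_average A k (\<lambda>S. N (average g S))"
proof -
  have "N (average g T) \<le> (\<Sum>j\<in>T. N (average g (T - {j}))) / real (Suc k)"
    if "T \<subseteq> A" "card T = Suc k" for T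
    using norm_average_le_average_remove_one[OF assms(1) finite_subset[OF that(1) assms(2)]]
      that(2) assms(3) by simp
  then have "subset_average A (Suc k) (\<lambda>T. N (average g T))
          \<le> subset_average A (Suc k) (\<lambda>T. (\<Sum>j\<in>T. N (average g (T - {j}))) / real (Suc k))"
    by (rule subset_average_mono)
  also have "\<dots> = subset_average A k (\<lambda>S. N (average g S))"
    by (rule subset_average_remove_one[OF assms(2,4)])
  finally show ?thesis .
qed

lemma subset_average_norm_average_antimono:
  assumes "is_norm N" "finite A" "1 \<le> k" "k \<le> k'" "k' \<le> card A"
  shows "subset_average A k' (\<lambda>S. N (average g S)) \<le> subset_average A k (\<lambda>S. N (average g S))"
  using assms(4,5)
proof (induction k' rule: dec_induct)
  case (step j)
  then show ?case
    using subset_average_norm_average_Suc_le[OF assms(1,2), of j g] assms(3) by simp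
qed simp

lemma subset_average_norm_average_le_complement:
  assumes "is_norm N" "finite A" "1 \<le> k" "k \<le> card A"
  shows "subset_average A k (\<lambda>S. N (average g S))
           \<le> real (card A) / real k * N (average g A)
             + real (card A - k) / real k * subset_average A (card A - k) (\<lambda>S. N (average g S))"
proof -
  have "subset_average A k (\<lambda>S. N (average g S))
          \<le> subset_average A k (\<lambda>S. real (card A) / real k * N (average g A)
                                     + real (card A - k) / real k * N (average g (A - S)))"
    using assms by (intro subset_average_mono norm_average_le_complement) auto
  also have "\<dots> = real (card A) / real k * N (average g A)
                   + real (card A - k) / real k * subset_average A k (\<lambda>S. N (average g (A - S)))"
    by (rule subset_average_affine[OF assms(2,4)])
  finally show ?thesis
    by (simp only: subset_average_complement[OF assms(2,4)])
qed

lemma expected_norm_Gk_eq_subset_average: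
  assumes "k \<le> m"
  shows "expected_norm_Gk N f m k x
           = subset_average {1..m} k (\<lambda>S. N (average (\<lambda>i. grad (f i) x) S))"
proof -
  have "batches m k = pmf_of_set (subsets_of_card {1..m} k)"
    by (simp add: batches_def subsets_of_card_def)
  then show ?thesis
    using assms
    by (simp add: expected_norm_Gk_def integral_pmf_of_set subsets_of_card_nonempty
        finite_subsets_of_card card_subsets_of_card subset_average_def minibatch_def average_def)
qed

lemma grad_has_derivative:
  fixes g :: "real^'n \<Rightarrow> real"
  assumes "g differentiable (at x)"
  shows "(g has_derivative (\<lambda>h. grad g x \<bullet> h)) (at x)"
proof -
  obtain D where D: "(g has_derivative D) (at x)"
    using assms unfolding differentiable_def by blast
  interpret D: linear D
    using has_derivative_linear[OF D] .
  have "D = (\<lambda>h. (\<Sum>b\<in>Basis. D b *\<^sub>R b) \<bullet> h)"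
  proof
    fix h
    have "D h = D (\<Sum>b\<in>Basis. (h \<bullet> b) *\<^sub>R b)"
      by (simp add: euclidean_representation)
    also have "\<dots> = (\<Sum>b\<in>Basis. D b *\<^sub>R b) \<bullet> h"
      by (simp add: D.sum D.scale inner_sum_left inner_commute[of h] mult.commute)
    finally show "D h = (\<Sum>b\<in>Basis. D b *\<^sub>R b) \<bullet> h" .
  qed
  with D have "\<exists>v. (g has_derivative (\<lambda>h. v \<bullet> h)) (at x)"
    by metis
  then show ?thesis
    unfolding grad_def by (rule someI_ex)
qed

lemma grad_eqI:
  fixes g :: "real^'n \<Rightarrow> real"
  assumes "(g has_derivative (\<lambda>h. v \<bullet> h)) (at x)"
  shows "grad g x = v"
proof -
  have "g differentiable (at x)"
    using assms unfolding differentiable_def by blast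
  then have "(\<lambda>h. grad g x \<bullet> h) = (\<lambda>h. v \<bullet> h)"
    using has_derivative_unique[OF grad_has_derivative assms] by blast
  then show ?thesis
    by (metis euclidean_eqI inner_commute)
qed

lemma grad_average:
  fixes f :: "'i \<Rightarrow> real^'n \<Rightarrow> real"
  assumes "\<And>i. i \<in> I \<Longrightarrow> f i differentiable (at x)"
  shows "grad (\<lambda>y. (1 / real (card I)) * (\<Sum>i\<in>I. f i y)) x = average (\<lambda>i. grad (f i) x) I"
proof (rule grad_eqI)
  have sum_derivative: "((\<lambda>y. \<Sum>i\<in>I. f i y) has_derivative (\<lambda>h. \<Sum>i\<in>I. grad (f i) x \<bullet> h)) (at x)"
    using assms by (intro has_derivative_sum grad_has_derivative)
  show "((\<lambda>y. (1 / real (card I)) * (\<Sum>i\<in>I. f i y))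
               has_derivative (\<lambda>h. average (\<lambda>i. grad (f i) x) I \<bullet> h)) (at x)"
    using has_derivative_mult_right[OF sum_derivative, of "1 / real (card I)"]
    by (simp add: average_def inner_sum_left)
qed

theorem theorem4p6:
  fixes f :: "nat \<Rightarrow> real^'n \<Rightarrow> real" and N :: "real^'n \<Rightarrow> real"
    and m :: nat and x :: "real^'n"
  assumes "m \<ge> 1"
    and "\<And>i y. i \<in> {1..m} \<Longrightarrow> f i differentiable (at y)"
    and "is_norm N"
  shows "(\<forall>k k'. 1 \<le> k \<and> k \<le> k' \<and> k' \<le> m \<longrightarrow>
             expected_norm_Gk N f m k' x \<le> expected_norm_Gk N f m k x)
       \<and> (\<forall>k. 1 \<le> k \<and> k \<le> m - 1 \<longrightarrow>
             expected_norm_Gk N f m k x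
               \<le> real m / real k * N (grad (\<lambda>y. (1 / real m) * (\<Sum>i=1..m. f i y)) x)
                 + real (m - k) / real k * expected_norm_Gk N f m (m - k) x)"
proof -
  define g where "g = (\<lambda>i. grad (f i) x)"
  have grad_f: "grad (\<lambda>y. (1 / real m) * (\<Sum>i=1..m. f i y)) x = average g {1..m}"
    using grad_average[of "{1..m}" f x] assms(2) by (simp add: g_def)
  have expectation: "expected_norm_Gk N f m k x = subset_average {1..m} k (\<lambda>S. N (average g S))"
    if "k \<le> m" for k
    using expected_norm_Gk_eq_subset_average[OF that] by (simp add: g_def)
  show ?thesis
    unfolding grad_f
    using subset_average_norm_average_antimono[OF assms(3), of "{1..m}"]
      subset_average_norm_average_le_complement[OF assms(3), of "{1..m}"]
    by (auto simp: expectation)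
qed

end
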